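(* Let $\mathbb{F}$ be a field, $d\geq3$ and $V$ a vector space over $\mathbb{F}$ of dimension $d+1$. Let $E^*_0,\dots,E^*_d$ be a system of mutually orthogonal idempotents in $\mathrm{End}(V)$ and $A\in\mathrm{End}(V)$ with $E^*_iAE^*_j=0$ if $|i-j|>1$ and $E^*_iAE^*_j\neq0$ if $|i-j|=1$. Assume $A$ is multiplicity-free and bipartite with primitive idempotents $E_0,\dots,E_d$ and eigenvalues $\theta_0,\dots,\theta_d$. Let $\theta^*_0,\dots,\theta^*_d\in\mathbb{F}$ be mutually distinct and $A^*=\sum_i\theta^*_iE^*_i$. Assume $E_0$ is normalizing, $(E_0,E_1)$ is a tail, and $E_2$ is the vertex of $\Delta$ other than $E_0$ adjacent to $E_1$. Let $a^*_i=\operatorname{tr}(E_iA^* )$, let $b^*_0c^*_1$ be as in the context, and put $\psi=\theta^*_1+\theta^*_0-a^*_1-a^*_0$, $\zeta=a^*_0a^*_1-b^*_0c^*_1-\theta^*_0\theta^*_1$. Then $$\psi=\frac{\theta_1(\theta^*_{d-1}-\theta^*_0)-\theta_2(\theta^*_d-\theta^*_1)}{\theta_2-\theta_1},\qquad \zeta=\frac{\theta_2\theta^*_0-\theta_0\theta^*_1}{\theta_2-\theta_0}\cdot\frac{\theta_2(\theta^*_d-\theta^*_1)-\theta_1(\theta^*_{d-1}-\theta^*_0)}{\theta_2-\theta_1}.$$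
   Context: A system of mutually orthogonal idempotents: $E^*_iE^*_j=\delta_{ij}E^*_i$, $\operatorname{rank}E^*_i=1$. $A$ multiplicity-free: $d+1$ distinct eigenvalues in $\mathbb{F}$; $E_i$ is the projection onto the $\theta_i$-eigenspace along the other eigenspaces. Bipartite: $\operatorname{tr}(E^*_iA)=0$ for all $i$. $\Delta$: graph on $E_0,\dots,E_d$ with $E_i\neq E_j$ adjacent iff $E_iA^*E_j\neq0$. $(E_0,E_1)$ is a tail if $E_0$ is adjacent to no vertex other than $E_1$ and $E_1$ is adjacent to at most one vertex other than $E_0$. The matrix $Y$ representing a map $X$ w.r.t. a basis $u_0,\dots,u_d$ satisfies $Xu_j=\sum_iY_{ij}u_i$. An eigenvalue $\theta$ of $A$ is normalizing if some basis with $v_i\in E^*_iV$ makes every row sum of the matrix representing $A$ equal to $\theta$; $E_i$ is normalizing if $\theta_i$ is. For any basis $w_0,\dots,w_d$ with $w_i\in E_iV$, $b^*_0$ and $c^*_1$ are the $(0,1)$- and $(1,0)$-entries of the matrix representing $A^*$; the product $b^*_0c^*_1$ is independent of the choice. *)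

theory Defs
  imports "Jordan_Normal_Form.Char_Poly" "Jordan_Normal_Form.DL_Rank"
begin

text \<open>Linear maps on V = F^n (n = d+1) are represented by n x n matrices.\<close>

definition mtrace :: "'a::comm_ring_1 mat \<Rightarrow> 'a" where
  "mtrace M = (\<Sum>i<dim_row M. M $$ (i, i))"

definition orth_idem_system :: "nat \<Rightarrow> (nat \<Rightarrow> 'a::field mat) \<Rightarrow> bool" where
  "orth_idem_system d Es \<longleftrightarrow>
     (\<forall>i\<le>d. Es i \<in> carrier_mat (d+1) (d+1) \<and> vec_space.rank (d+1) (Es i) = 1) \<and>
     (\<forall>i\<le>d. \<forall>j\<le>d. Es i * Es j = (if i = j then Es i else 0\<^sub>m (d+1) (d+1)))"

text \<open>A is multiplicity-free with eigenvalues th_0..th_d (distinct, in F) and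
  E_i is the projection onto the th_i-eigenspace along the other eigenspaces.\<close>
definition primitive_idempotents ::
  "nat \<Rightarrow> 'a::field mat \<Rightarrow> (nat \<Rightarrow> 'a) \<Rightarrow> (nat \<Rightarrow> 'a mat) \<Rightarrow> bool" where
  "primitive_idempotents d A th E \<longleftrightarrow>
     (\<forall>i\<le>d. \<forall>j\<le>d. i \<noteq> j \<longrightarrow> th i \<noteq> th j) \<and>
     (\<forall>i\<le>d. eigenvalue A (th i)) \<and>
     (\<forall>i\<le>d. E i \<in> carrier_mat (d+1) (d+1) \<and>
        (\<forall>j\<le>d. \<forall>v \<in> carrier_vec (d+1). A *\<^sub>v v = th j \<cdot>\<^sub>v v \<longrightarrow>
            E i *\<^sub>v v = (if i = j then v else 0\<^sub>v (d+1))))"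

definition bipartite :: "nat \<Rightarrow> (nat \<Rightarrow> 'a::field mat) \<Rightarrow> 'a mat \<Rightarrow> bool" where
  "bipartite d Es A \<longleftrightarrow> (\<forall>i\<le>d. mtrace (Es i * A) = 0)"

definition Delta_adj ::
  "nat \<Rightarrow> (nat \<Rightarrow> 'a::field mat) \<Rightarrow> 'a mat \<Rightarrow> nat \<Rightarrow> nat \<Rightarrow> bool" where
  "Delta_adj d E As i j \<longleftrightarrow> E i \<noteq> E j \<and> E i * As * E j \<noteq> 0\<^sub>m (d+1) (d+1)"

definition is_tail :: "nat \<Rightarrow> (nat \<Rightarrow> 'a::field mat) \<Rightarrow> 'a mat \<Rightarrow> bool" where
  "is_tail d E As \<longleftrightarrow>
     (\<forall>j\<le>d. Delta_adj d E As 0 j \<longrightarrow> E j = E 1) \<and>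
     card {E j | j. j \<le> d \<and> Delta_adj d E As 1 j \<and> E j \<noteq> E 0} \<le> 1"

text \<open>th is normalizing: some basis v_0..v_d (the columns of an invertible P)
  with v_i in E*_i V such that the matrix Y representing A (A v_j = sum_i Y_ij v_i,
  i.e. A P = P Y) has all row sums equal to th.\<close>
definition normalizing :: "nat \<Rightarrow> (nat \<Rightarrow> 'a::field mat) \<Rightarrow> 'a mat \<Rightarrow> 'a \<Rightarrow> bool" where
  "normalizing d Es A th \<longleftrightarrow>
     (\<exists>P Y. P \<in> carrier_mat (d+1) (d+1) \<and> Y \<in> carrier_mat (d+1) (d+1) \<and>
        invertible_mat P \<and>
        (\<forall>i\<le>d. col P i \<in> (\<lambda>v. Es i *\<^sub>v v) ` carrier_vec (d+1)) \<and>
        A * P = P * Y \<and>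
        (\<forall>i\<le>d. (\<Sum>j\<le>d. Y $$ (i, j)) = th))"

end

theory Submission
  imports Defs
begin

text \<open>
  Let X be the transition matrix from a basis (w_i) with w_i in E_i V to a basis (v_i) with
  v_i in E*_i V, and let Y represent A in (v_i) and B represent A* in (w_i).  Then
  X Y = diag(theta) X and B X = X diag(theta*).

  Y is tridiagonal with zero diagonal and nonzero off-diagonal entries.  Hence
  x_{j1} y_{10} = theta_j x_{j0} and x_{j,d-1} y_{d-1,d} = theta_j x_{jd}, and the first row of X,
  a nonzero left eigenvector of Y, has nonzero first and last entries.  Since (E_0, E_1) is a
  tail, the first two rows of B have at most two and three nonzero entries, so
  p_k(theta*_i) x_{0i} = c_k x_{ki} for k = 1, 2, where p_1(t) = t - a*_0 and
  p_2(t) = (t - a*_0)(t - a*_1) - b*_0 c*_1.  Eliminating the entries of X between rows 0, k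
  and columns 0, 1 (resp. d, d-1) gives theta_0 p_k(theta*_1) = theta_k p_k(theta*_0) and
  theta_k p_k(theta*_d) = theta_0 p_k(theta*_{d-1}); these four equations determine psi and zeta.
\<close>

lemma mtrace_mult_comm:
  assumes "M \<in> carrier_mat n m" and "N \<in> carrier_mat m n"
  shows "mtrace (M * N) = mtrace (N * M)"
proof -
  have "mtrace (M * N) = (\<Sum>i<n. \<Sum>k<m. M $$ (i,k) * N $$ (k,i))"
    using assms by (simp add: mtrace_def scalar_prod_def atLeast0LessThan)
  also have "\<dots> = (\<Sum>k<m. \<Sum>i<n. N $$ (k,i) * M $$ (i,k))"
    by (subst sum.swap) (simp add: mult.commute)
  also have "\<dots> = mtrace (N * M)"
    using assms by (simp add: mtrace_def scalar_prod_def atLeast0LessThan)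
  finally show ?thesis .
qed

lemma smult_mat_mult_vec:
  "M \<in> carrier_mat n m \<Longrightarrow> v \<in> carrier_vec m \<Longrightarrow> (c \<cdot>\<^sub>m M) *\<^sub>v v = c \<cdot>\<^sub>v (M *\<^sub>v v)"
  by (rule eq_vecI) (auto intro!: smult_scalar_prod_distrib[of _ m])

lemma invertible_mat_obtain_inverse:
  fixes W :: "'a::semiring_1 mat"
  assumes "W \<in> carrier_mat n n" and "invertible_mat W"
  obtains V where "V \<in> carrier_mat n n" "V * W = 1\<^sub>m n" "W * V = 1\<^sub>m n"
proof -
  from assms obtain V where V: "W * V = 1\<^sub>m n" "V * W = 1\<^sub>m (dim_row V)"
    unfolding invertible_mat_def inverts_mat_def by auto
  then have "V \<in> carrier_mat n n" using assms(1)
    by (metis carrier_matD(2) carrier_matI index_mult_mat(3) index_one_mat(3))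
  with V that show ?thesis by simp
qed

lemma det_nonzero_imp_invertible_mat:
  fixes U :: "'a::field mat"
  assumes U: "U \<in> carrier_mat n n" and "det U \<noteq> 0"
  shows "invertible_mat U"
proof -
  from det_non_zero_imp_unit[OF assms, of "()"] obtain V
    where "V \<in> carrier_mat n n" "V * U = 1\<^sub>m n" "U * V = 1\<^sub>m n"
    unfolding Units_def ring_mat_def by auto
  with U show ?thesis unfolding invertible_mat_def inverts_mat_def square_mat.simps by auto
qed

lemma invertible_mat_mult_right_cancel:
  fixes U :: "'a::semiring_1 mat"
  assumes "M * U = N * U" and "M \<in> carrier_mat n n" "N \<in> carrier_mat n n"
    and "U \<in> carrier_mat n n" "invertible_mat U"
  shows "M = N"
proof -
  obtain V where V: "V \<in> carrier_mat n n" "U * V = 1\<^sub>m n"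
    using invertible_mat_obtain_inverse[OF assms(4,5)] by metis
  have "M = M * U * V"
    using assms(2,4) V by (simp add: assoc_mult_mat[of M n n U n V n])
  also have "\<dots> = N * U * V" using assms(1) by simp
  also have "\<dots> = N"
    using assms(3,4) V by (simp add: assoc_mult_mat[of N n n U n V n])
  finally show ?thesis .
qed

lemma transition_matrix_intertwines:
  fixes W P :: "'a::semiring_1 mat"
  assumes W: "W \<in> carrier_mat n n" "invertible_mat W" and P: "P \<in> carrier_mat n n" "invertible_mat P"
  obtains X where "X \<in> carrier_mat n n" and "\<And>i. i < n \<Longrightarrow> \<exists>k<n. X $$ (i, k) \<noteq> 0"
    and "\<And>M N K. M \<in> carrier_mat n n \<Longrightarrow> N \<in> carrier_mat n n \<Longrightarrow> K \<in> carrier_mat n n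
      \<Longrightarrow> M * W = W * N \<Longrightarrow> M * P = P * K \<Longrightarrow> N * X = X * K"
proof -
  obtain V where V: "V \<in> carrier_mat n n" "V * W = 1\<^sub>m n" "W * V = 1\<^sub>m n"
    using invertible_mat_obtain_inverse[OF W] by metis
  obtain Q where Q: "Q \<in> carrier_mat n n" "P * Q = 1\<^sub>m n"
    using invertible_mat_obtain_inverse[OF P] by metis
  define X where "X = V * P"
  have X: "X \<in> carrier_mat n n" unfolding X_def using V(1) P(1) by simp
  have "X * (Q * W) = V * (P * Q) * W"
    unfolding X_def using assoc_mult_mat[OF mult_carrier_mat[OF V(1) P(1)] Q(1) W(1)]
      assoc_mult_mat[OF V(1) P(1) Q(1)] by simp
  also have "\<dots> = 1\<^sub>m n" using Q V W by simp
  finally have inv: "X * (Q * W) = 1\<^sub>m n" .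
  have rows: "\<exists>k<n. X $$ (i, k) \<noteq> 0" if i: "i < n" for i
  proof (rule ccontr)
    assume "\<not> ?thesis"
    then have "(\<Sum>k\<in>{0..<n}. X $$ (i, k) * (Q * W) $$ (k, i)) = 0" by simp
    then have "(X * (Q * W)) $$ (i, i) = 0" using X Q W i by (simp add: scalar_prod_def)
    with inv i show False by simp
  qed
  have "N * X = X * K" if M: "M \<in> carrier_mat n n" and N: "N \<in> carrier_mat n n"
    and K: "K \<in> carrier_mat n n" and MW: "M * W = W * N" and MP: "M * P = P * K" for M N K
  proof -
    have "V * M * W = V * (W * N)" using assoc_mult_mat[OF V(1) M W(1)] MW by simp
    also have "\<dots> = N" using assoc_mult_mat[OF V(1) W(1) N] V(2) N by simp
    finally have VMW: "V * M * W = N" .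
    have "N * X = V * M * (W * V) * P"
      unfolding X_def using VMW assoc_mult_mat[OF mult_carrier_mat[OF V(1) M] W(1) V(1)]
        assoc_mult_mat[OF N V(1) P(1)] by simp
    also have "\<dots> = V * (M * P)" using V M P by (simp add: assoc_mult_mat[OF V(1) M P(1)])
    also have "\<dots> = X * K" unfolding X_def using MP assoc_mult_mat[OF V(1) P(1) K] by simp
    finally show ?thesis .
  qed
  with X rows show thesis by (rule that)
qed

lemma mult_eq_mult_mat_diag_if_col_eigen:
  fixes M :: "'a::comm_ring_1 mat"
  assumes M: "M \<in> carrier_mat n n" and N: "N \<in> carrier_mat n m"
    and eigen: "\<And>j. j < m \<Longrightarrow> M *\<^sub>v col N j = f j \<cdot>\<^sub>v col N j"
  shows "M * N = N * mat_diag m f"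
proof (rule eq_matI)
  fix i j assume "i < dim_row (N * mat_diag m f)" "j < dim_col (N * mat_diag m f)"
  then have ij: "i < n" "j < m" using N by (auto simp: mat_diag_def)
  have "(M * N) $$ (i,j) = (M *\<^sub>v col N j) $ i" using M N ij by simp
  also have "\<dots> = N $$ (i,j) * f j" using eigen[OF ij(2)] N ij by simp
  finally show "(M * N) $$ (i,j) = (N * mat_diag m f) $$ (i,j)"
    using N ij by (simp add: mat_diag_mult_right)
qed (use M N in \<open>auto simp: mat_diag_def\<close>)

definition orth_idempotents :: "nat \<Rightarrow> (nat \<Rightarrow> 'a::ring_1 mat) \<Rightarrow> bool" where
  "orth_idempotents n F \<longleftrightarrow> (\<forall>k<n. F k \<in> carrier_mat n n) \<and>
     (\<forall>k<n. \<forall>j<n. F k * F j = (if k = j then F k else 0\<^sub>m n n))"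

lemma orth_idempotents_carrier: "orth_idempotents n F \<Longrightarrow> k < n \<Longrightarrow> F k \<in> carrier_mat n n"
  unfolding orth_idempotents_def by blast

lemma orth_idempotents_mult:
  assumes "orth_idempotents n F" and "k < n" "j < n"
  shows "F k * F j = of_bool (k = j) \<cdot>\<^sub>m F j"
  using assms orth_idempotents_carrier[OF assms(1,3)] unfolding orth_idempotents_def
  by (auto intro!: eq_matI)

definition idem_combination :: "nat \<Rightarrow> (nat \<Rightarrow> 'a::comm_ring_1) \<Rightarrow> (nat \<Rightarrow> 'a mat) \<Rightarrow> 'a mat" where
  "idem_combination n c F = mat n n (\<lambda>(r, s). \<Sum>i<n. c i * F i $$ (r, s))"

lemma idem_combination_mult:
  fixes F :: "nat \<Rightarrow> 'a::comm_ring_1 mat"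
  assumes F: "orth_idempotents n F" and j: "j < n"
  shows "idem_combination n c F * F j = c j \<cdot>\<^sub>m F j"
proof (rule eq_matI)
  fix r s assume "r < dim_row (c j \<cdot>\<^sub>m F j)" "s < dim_col (c j \<cdot>\<^sub>m F j)"
  then have rs: "r < n" "s < n" using orth_idempotents_carrier[OF F j] by auto
  have "(idem_combination n c F * F j) $$ (r, s) = (\<Sum>l<n. (\<Sum>i<n. c i * F i $$ (r, l)) * F j $$ (l, s))"
    using rs orth_idempotents_carrier[OF F j]
    by (simp add: idem_combination_def scalar_prod_def atLeast0LessThan)
  also have "\<dots> = (\<Sum>i<n. c i * (\<Sum>l<n. F i $$ (r, l) * F j $$ (l, s)))"
    by (simp add: sum_distrib_left sum_distrib_right mult.assoc) (rule sum.swap)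
  also have "\<dots> = (\<Sum>i<n. c i * (F i * F j) $$ (r, s))"
  proof (intro sum.cong refl)
    fix i assume "i \<in> {..<n}"
    then have "F i \<in> carrier_mat n n" using orth_idempotents_carrier[OF F] by simp
    then show "c i * (\<Sum>l<n. F i $$ (r, l) * F j $$ (l, s)) = c i * (F i * F j) $$ (r, s)"
      using rs orth_idempotents_carrier[OF F j] by (simp add: scalar_prod_def atLeast0LessThan)
  qed
  also have "\<dots> = (\<Sum>i<n. of_bool (i = j) * (c j * F j $$ (r, s)))"
    using rs orth_idempotents_mult[OF F _ j] orth_idempotents_carrier[OF F j]
    by (intro sum.cong) auto
  finally show "(idem_combination n c F * F j) $$ (r, s) = (c j \<cdot>\<^sub>m F j) $$ (r, s)"
    using rs j orth_idempotents_carrier[OF F j] by simp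
qed (use orth_idempotents_carrier[OF F j] in \<open>auto simp: idem_combination_def\<close>)

lemma mult_eq_mult_mat_diag_if_adapted:
  fixes M :: "'a::comm_ring_1 mat"
  assumes M: "M \<in> carrier_mat n n" and W: "W \<in> carrier_mat n n"
    and F: "\<forall>j<n. F j \<in> carrier_mat n n" and MF: "\<forall>j<n. M * F j = f j \<cdot>\<^sub>m F j"
    and adapted: "\<forall>j<n. col W j \<in> (\<lambda>v. F j *\<^sub>v v) ` carrier_vec n"
  shows "M * W = W * mat_diag n f"
proof (rule mult_eq_mult_mat_diag_if_col_eigen[OF M W])
  fix j assume j: "j < n"
  then obtain v where v: "v \<in> carrier_vec n" "col W j = F j *\<^sub>v v" using adapted by blast
  have Fj: "F j \<in> carrier_mat n n" using F j by simp
  have "M *\<^sub>v (F j *\<^sub>v v) = (M * F j) *\<^sub>v v" using assoc_mult_mat_vec[OF M Fj v(1)] by simp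
  also have "\<dots> = f j \<cdot>\<^sub>v (F j *\<^sub>v v)" using MF j smult_mat_mult_vec[OF Fj v(1)] by simp
  finally show "M *\<^sub>v col W j = f j \<cdot>\<^sub>v col W j" using v by simp
qed

locale adapted_basis =
  fixes n :: nat and F :: "nat \<Rightarrow> 'a::field mat" and W :: "'a mat"
  assumes orth: "orth_idempotents n F"
    and W: "W \<in> carrier_mat n n" "invertible_mat W"
    and adapted: "\<forall>j<n. col W j \<in> (\<lambda>v. F j *\<^sub>v v) ` carrier_vec n"
begin

lemma idempotent_mult_basis:
  assumes "k < n"
  shows "F k * W = W * mat_diag n (\<lambda>i. of_bool (i = k))"
  using orth_idempotents_carrier[OF orth] orth_idempotents_mult[OF orth assms]
  by (intro mult_eq_mult_mat_diag_if_adapted[OF _ W(1) _ _ adapted]) (simp_all add: assms)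

context
  fixes M N :: "'a mat" and k :: nat
  assumes M: "M \<in> carrier_mat n n" and N: "N \<in> carrier_mat n n"
    and MN: "M * W = W * N" and k: "k < n"
begin

private abbreviation "e i \<equiv> mat_diag n (\<lambda>l. of_bool (l = i))"

private lemmas assoc = assoc_mult_mat[of _ n n _ n _ n] mult_carrier_mat[of _ n n _ n]

private lemma Fk_mult_basis: "F k * M * W = W * (e k * N)"
proof -
  have Fk: "F k \<in> carrier_mat n n" using orth_idempotents_carrier[OF orth k] .
  have "F k * M * W = F k * W * N" using Fk M N W(1) by (simp add: assoc MN)
  also have "\<dots> = W * (e k * N)" using W(1) N by (simp add: idempotent_mult_basis[OF k] assoc)
  finally show ?thesis .
qed

lemma entry_eq_0_iff:
  assumes j: "j < n"
  shows "F k * M * F j = 0\<^sub>m n n \<longleftrightarrow> N $$ (k, j) = 0"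
proof -
  have Fk: "F k \<in> carrier_mat n n" and Fj: "F j \<in> carrier_mat n n"
    using orth_idempotents_carrier[OF orth] k j by auto
  define Z where "Z = e k * N * e j"
  have Z: "Z = mat n n (\<lambda>(r, s). of_bool (r = k) * N $$ (r, s) * of_bool (s = j))"
    unfolding Z_def mat_diag_mult_left[OF N] by (subst mat_diag_mult_right) auto
  have Zc: "Z \<in> carrier_mat n n" unfolding Z by simp
  have "F k * M * F j * W = F k * M * (W * e j)"
    using Fk M Fj W(1) by (simp add: assoc idempotent_mult_basis[OF j])
  also have "\<dots> = F k * M * W * e j" using Fk M W(1) by (simp add: assoc)
  also have "\<dots> = W * Z" using N W(1) by (simp add: Fk_mult_basis assoc Z_def)
  finally have FMF: "F k * M * F j * W = W * Z" .
  obtain V where V: "V \<in> carrier_mat n n" "V * W = 1\<^sub>m n"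
    using invertible_mat_obtain_inverse[OF W] by metis
  show ?thesis
  proof
    assume "F k * M * F j = 0\<^sub>m n n"
    then have "W * Z = 0\<^sub>m n n" using FMF W(1) by simp
    moreover have "V * (W * Z) = Z"
      unfolding assoc_mult_mat[OF V(1) W(1) Zc, symmetric] V(2) using Zc by simp
    ultimately have "Z = 0\<^sub>m n n" using V by simp
    moreover have "Z $$ (k, j) = N $$ (k, j)" unfolding Z using k j by simp
    ultimately show "N $$ (k, j) = 0" using k j by simp
  next
    assume "N $$ (k, j) = 0"
    then have "Z = 0\<^sub>m n n" unfolding Z by (auto intro!: eq_matI)
    then have "F k * M * F j * W = 0\<^sub>m n n * W" using FMF W(1) by simp
    then show "F k * M * F j = 0\<^sub>m n n"
      using Fk M Fj by (intro invertible_mat_mult_right_cancel[OF _ _ zero_carrier_mat W])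
        (auto intro: mult_carrier_mat)
  qed
qed

lemma mtrace_eq_entry: "mtrace (F k * M) = N $$ (k, k)"
proof -
  have Fk: "F k \<in> carrier_mat n n" using orth_idempotents_carrier[OF orth k] .
  obtain V where V: "V \<in> carrier_mat n n" "W * V = 1\<^sub>m n" "V * W = 1\<^sub>m n"
    using invertible_mat_obtain_inverse[OF W] by metis
  have "F k * M = F k * M * W * V"
    using Fk M V W(1) by (simp add: assoc)
  also have "\<dots> = W * (e k * N) * V" by (simp add: Fk_mult_basis)
  also have "\<dots> = W * (e k * N * V)" using N V W(1) by (simp add: assoc)
  finally have FM: "F k * M = W * (e k * N * V)" .
  have "mtrace (F k * M) = mtrace (e k * N * V * W)" unfolding FM
    by (intro mtrace_mult_comm[OF W(1)] mult_carrier_mat[OF mult_carrier_mat[OF mat_diag_dim N] V(1)])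
  also have "\<dots> = mtrace (e k * N)" using N V W(1) by (simp add: assoc)
  also have "\<dots> = (\<Sum>i<n. of_bool (i = k) * N $$ (i, i))"
    using N V by (simp add: mtrace_def mat_diag_mult_left)
  also have "\<dots> = N $$ (k, k)" using k by simp
  finally show ?thesis .
qed

end

end

lemma primitive_idempotents_eigenbasis:
  fixes A :: "'a::field mat"
  assumes prim: "primitive_idempotents d A th E" and A: "A \<in> carrier_mat (d+1) (d+1)"
  obtains U where "U \<in> carrier_mat (d+1) (d+1)" "invertible_mat U"
    "A * U = U * mat_diag (d+1) th"
    "\<And>k. k \<le> d \<Longrightarrow> E k * U = U * mat_diag (d+1) (\<lambda>i. of_bool (i = k))"
proof -
  define n where "n = d+1"
  have E: "\<And>k. k \<le> d \<Longrightarrow> E k \<in> carrier_mat n n"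
    and E_eigen: "\<And>k j v. k \<le> d \<Longrightarrow> j \<le> d \<Longrightarrow> v \<in> carrier_vec n \<Longrightarrow> A *\<^sub>v v = th j \<cdot>\<^sub>v v
       \<Longrightarrow> E k *\<^sub>v v = (if k = j then v else 0\<^sub>v n)"
    using prim unfolding primitive_idempotents_def n_def by auto
  have "\<forall>j. \<exists>v. j \<le> d \<longrightarrow> v \<in> carrier_vec n \<and> v \<noteq> 0\<^sub>v n \<and> A *\<^sub>v v = th j \<cdot>\<^sub>v v"
    using prim A unfolding primitive_idempotents_def eigenvalue_def eigenvector_def n_def by auto
  then obtain u where
    u: "\<And>j. j \<le> d \<Longrightarrow> u j \<in> carrier_vec n \<and> u j \<noteq> 0\<^sub>v n \<and> A *\<^sub>v u j = th j \<cdot>\<^sub>v u j"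
    by metis
  define U where "U = mat n n (\<lambda>(i, j). u j $ i)"
  have U: "U \<in> carrier_mat n n" unfolding U_def by simp
  have col_U: "col U j = u j" if "j < n" for j
    using that u[of j] unfolding U_def n_def by (intro eq_vecI) auto
  have AU: "A * U = U * mat_diag n th"
    using A u col_U by (intro mult_eq_mult_mat_diag_if_col_eigen[OF _ U]) (simp_all add: n_def)
  have EU: "E k * U = U * mat_diag n (\<lambda>i. of_bool (i = k))" if k: "k \<le> d" for k
  proof (rule mult_eq_mult_mat_diag_if_col_eigen[OF E[OF k] U])
    fix j assume "j < n"
    then show "E k *\<^sub>v col U j = of_bool (j = k) \<cdot>\<^sub>v col U j"
      using E_eigen[OF k, of j "u j"] u[of j] col_U unfolding n_def by auto
  qed
  have "det U \<noteq> 0"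
  proof
    assume "det U = 0"
    then obtain c where c: "c \<in> carrier_vec n" "c \<noteq> 0\<^sub>v n" "U *\<^sub>v c = 0\<^sub>v n"
      using det_0_iff_vec_prod_zero_field[OF U] by auto
    have "c $ k = 0" if k: "k < n" for k
    proof -
      have Ek: "E k \<in> carrier_mat n n" and uk: "u k \<in> carrier_vec n" "u k \<noteq> 0\<^sub>v n"
        using E[of k] u[of k] k unfolding n_def by auto
      have "(U * mat_diag n (\<lambda>i. of_bool (i = k))) *\<^sub>v c = E k *\<^sub>v (U *\<^sub>v c)"
        using EU[of k] k assoc_mult_mat_vec[OF Ek U c(1)] unfolding n_def by simp
      also have "\<dots> = 0\<^sub>v n" using c(3) Ek by auto
      finally have zero: "(U * mat_diag n (\<lambda>i. of_bool (i = k))) *\<^sub>v c = 0\<^sub>v n" .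
      obtain i where i: "i < n" "u k $ i \<noteq> 0"
        using uk by (metis carrier_vecD eq_vecI index_zero_vec(1,2))
      have "((U * mat_diag n (\<lambda>i. of_bool (i = k))) *\<^sub>v c) $ i
          = (\<Sum>j<n. U $$ (i, j) * of_bool (j = k) * c $ j)"
        using U c i by (simp add: mat_diag_mult_right scalar_prod_def atLeast0LessThan)
      also have "\<dots> = u k $ i * c $ k" using k i unfolding U_def by (subst sum.remove[of _ k]) auto
      finally show ?thesis using zero i by simp
    qed
    then have "c = 0\<^sub>v n" using c(1) by (intro eq_vecI) auto
    with c(2) show False by simp
  qed
  then have "invertible_mat U" using det_nonzero_imp_invertible_mat[OF U] by simp
  with U AU EU show thesis by (intro that) (simp_all add: n_def)
qed

lemma primitive_idempotents_orth_idempotents: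
  fixes A :: "'a::field mat"
  assumes prim: "primitive_idempotents d A th E" and A: "A \<in> carrier_mat (d+1) (d+1)"
  shows "orth_idempotents (d+1) E"
proof -
  obtain U where U: "U \<in> carrier_mat (d+1) (d+1)" "invertible_mat U"
    and EU: "\<And>k. k \<le> d \<Longrightarrow> E k * U = U * mat_diag (d+1) (\<lambda>i. of_bool (i = k))"
    using primitive_idempotents_eigenbasis[OF prim A] by metis
  have E: "E k \<in> carrier_mat (d+1) (d+1)" if "k \<le> d" for k
    using prim that unfolding primitive_idempotents_def by auto
  have "E k * E j = (if k = j then E k else 0\<^sub>m (d+1) (d+1))" if k: "k \<le> d" and j: "j \<le> d" for k j
  proof (rule invertible_mat_mult_right_cancel[OF _ _ _ U])
    have "E k * E j * U = E k * U * mat_diag (d+1) (\<lambda>i. of_bool (i = j))"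
      using E[OF k] E[OF j] U(1) by (simp add: assoc_mult_mat[of _ "d+1" "d+1" _ "d+1" _ "d+1"] EU[OF j])
    also have "\<dots> = U * mat_diag (d+1) (\<lambda>i. of_bool (i = k) * of_bool (i = j))"
      using U(1) by (simp add: assoc_mult_mat[of _ "d+1" "d+1" _ "d+1" _ "d+1"] EU[OF k])
    also have "mat_diag (d+1) (\<lambda>i. of_bool (i = k) * of_bool (i = j) :: 'a)
        = (if k = j then mat_diag (d+1) (\<lambda>i. of_bool (i = k)) else 0\<^sub>m (d+1) (d+1))"
      by (auto intro!: eq_matI simp: mat_diag_def)
    also have "U * \<dots> = (if k = j then E k else 0\<^sub>m (d+1) (d+1)) * U"
      using U(1) E[OF k] by (cases "k = j") (simp_all add: EU[OF j])
    finally show "E k * E j * U = (if k = j then E k else 0\<^sub>m (d+1) (d+1)) * U" .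
  qed (use E[OF k] E[OF j] in \<open>auto intro: mult_carrier_mat\<close>)
  with E show ?thesis unfolding orth_idempotents_def by auto
qed

lemma primitive_idempotents_mult:
  fixes A :: "'a::field mat"
  assumes prim: "primitive_idempotents d A th E" and A: "A \<in> carrier_mat (d+1) (d+1)"
    and j: "j \<le> d"
  shows "A * E j = th j \<cdot>\<^sub>m E j"
proof -
  obtain U where U: "U \<in> carrier_mat (d+1) (d+1)" "invertible_mat U"
    and AU: "A * U = U * mat_diag (d+1) th"
    and EU: "\<And>k. k \<le> d \<Longrightarrow> E k * U = U * mat_diag (d+1) (\<lambda>i. of_bool (i = k))"
    using primitive_idempotents_eigenbasis[OF prim A] by metis
  have Ej: "E j \<in> carrier_mat (d+1) (d+1)"
    using prim j unfolding primitive_idempotents_def by auto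
  have "A * E j * U = A * U * mat_diag (d+1) (\<lambda>i. of_bool (i = j))"
    using A Ej U(1) by (simp add: assoc_mult_mat[of _ "d+1" "d+1" _ "d+1" _ "d+1"] EU[OF j])
  also have "\<dots> = U * mat_diag (d+1) (\<lambda>i. th i * of_bool (i = j))"
    using U(1) by (simp add: assoc_mult_mat[of _ "d+1" "d+1" _ "d+1" _ "d+1"] AU)
  also have "mat_diag (d+1) (\<lambda>i. th i * of_bool (i = j))
      = th j \<cdot>\<^sub>m mat_diag (d+1) (\<lambda>i. of_bool (i = j))"
    by (rule eq_matI) (auto simp: mat_diag_def)
  also have "U * \<dots> = (th j \<cdot>\<^sub>m E j) * U"
    unfolding mult_smult_distrib[OF U(1) mat_diag_dim] EU[OF j, symmetric]
    using U(1) Ej by (simp add: mult_smult_assoc_mat)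
  finally show ?thesis
    using A Ej Ej by (rule invertible_mat_mult_right_cancel[OF _ mult_carrier_mat smult_carrier_mat U])
qed

lemma primitive_idempotents_distinct:
  assumes prim: "primitive_idempotents d A th E" and A: "A \<in> carrier_mat (d+1) (d+1)"
    and "k \<le> d" "j \<le> d" "k \<noteq> j"
  shows "E k \<noteq> E j"
proof
  obtain v where v: "v \<in> carrier_vec (d+1)" "v \<noteq> 0\<^sub>v (d+1)" "A *\<^sub>v v = th k \<cdot>\<^sub>v v"
    using prim A \<open>k \<le> d\<close> unfolding primitive_idempotents_def eigenvalue_def eigenvector_def by auto
  have "E k *\<^sub>v v = v" and "E j *\<^sub>v v = 0\<^sub>v (d+1)"
    using prim v assms(3-5) unfolding primitive_idempotents_def by auto
  moreover assume "E k = E j"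
  ultimately show False using v(2) by simp
qed

lemma primitive_idempotents_adapted_basis:
  fixes A W :: "'a::field mat"
  assumes prim: "primitive_idempotents d A th E" and A: "A \<in> carrier_mat (d+1) (d+1)"
    and W: "W \<in> carrier_mat (d+1) (d+1)" "invertible_mat W"
      "\<forall>i\<le>d. col W i \<in> (\<lambda>v. E i *\<^sub>v v) ` carrier_vec (d+1)"
  shows "adapted_basis (d+1) E W" and "A * W = W * mat_diag (d+1) th"
proof -
  have E: "orth_idempotents (d+1) E" using primitive_idempotents_orth_idempotents[OF prim A] .
  then show "adapted_basis (d+1) E W"
    using W unfolding adapted_basis_def by (simp add: less_Suc_eq_le)
  show "A * W = W * mat_diag (d+1) th"
    using primitive_idempotents_mult[OF prim A] orth_idempotents_carrier[OF E] W
    by (intro mult_eq_mult_mat_diag_if_adapted[OF A W(1)]) (auto simp: less_Suc_eq_le)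
qed

lemma orth_idem_system_adapted_basis:
  fixes P :: "'a::field mat"
  assumes Es: "orth_idem_system d Es"
    and P: "P \<in> carrier_mat (d+1) (d+1)" "invertible_mat P"
      "\<forall>i\<le>d. col P i \<in> (\<lambda>v. Es i *\<^sub>v v) ` carrier_vec (d+1)"
  shows "adapted_basis (d+1) Es P" and "idem_combination (d+1) c Es * P = P * mat_diag (d+1) c"
proof -
  have Es_orth: "orth_idempotents (d+1) Es"
    using Es unfolding orth_idem_system_def orth_idempotents_def by auto
  then show "adapted_basis (d+1) Es P"
    using P unfolding adapted_basis_def by (simp add: less_Suc_eq_le)
  show "idem_combination (d+1) c Es * P = P * mat_diag (d+1) c"
    using idem_combination_mult[OF Es_orth] orth_idempotents_carrier[OF Es_orth] P
    by (intro mult_eq_mult_mat_diag_if_adapted[OF _ P(1)]) (auto simp: less_Suc_eq_le idem_combination_def)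
qed

lemma left_eigenvector_upper_hessenberg_vanishes:
  fixes x :: "nat \<Rightarrow> 'a::field" and y :: "nat \<Rightarrow> nat \<Rightarrow> 'a"
  assumes eigen: "\<And>c. c < n \<Longrightarrow> (\<Sum>k<n. x k * y k c) = \<theta> * x c"
    and hessenberg: "\<And>k c. k < n \<Longrightarrow> Suc c < k \<Longrightarrow> y k c = 0"
    and subdiag: "\<And>k. Suc k < n \<Longrightarrow> y (Suc k) k \<noteq> 0"
    and "x 0 = 0" and "i < n"
  shows "x i = 0"
proof -
  have "\<forall>k\<le>m. x k = 0" if "m < n" for m
    using that
  proof (induction m)
    case 0
    then show ?case using \<open>x 0 = 0\<close> by simp
  next
    case (Suc m)
    then have IH: "\<forall>k\<le>m. x k = 0" by simp
    have "(\<Sum>k<n. x k * y k m) = (\<Sum>k\<in>{Suc m}. x k * y k m)"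
    proof (rule sum.mono_neutral_right)
      show "\<forall>k\<in>{..<n} - {Suc m}. x k * y k m = 0"
      proof
        fix k assume k: "k \<in> {..<n} - {Suc m}"
        then consider "k \<le> m" | "Suc m < k" by fastforce
        then show "x k * y k m = 0" using IH hessenberg k by cases auto
      qed
    qed (use Suc.prems in simp_all)
    then have "x (Suc m) * y (Suc m) m = 0" using eigen[of m] IH Suc.prems by simp
    then show ?case using IH subdiag[OF Suc.prems] le_Suc_eq by auto
  qed
  then show ?thesis using \<open>i < n\<close> by blast
qed

lemma left_eigenvector_lower_hessenberg_vanishes:
  fixes x :: "nat \<Rightarrow> 'a::field" and y :: "nat \<Rightarrow> nat \<Rightarrow> 'a"
  assumes eigen: "\<And>c. c < n \<Longrightarrow> (\<Sum>k<n. x k * y k c) = \<theta> * x c"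
    and hessenberg: "\<And>k c. c < n \<Longrightarrow> Suc k < c \<Longrightarrow> y k c = 0"
    and superdiag: "\<And>k. Suc k < n \<Longrightarrow> y k (Suc k) \<noteq> 0"
    and "x (n - 1) = 0" and "i < n"
  shows "x i = 0"
proof -
  have "x (n - Suc (n - Suc i)) = 0"
  proof (rule left_eigenvector_upper_hessenberg_vanishes
      [where x = "\<lambda>k. x (n - Suc k)" and y = "\<lambda>k c. y (n - Suc k) (n - Suc c)"])
    show "(\<Sum>k<n. x (n - Suc k) * y (n - Suc k) (n - Suc c)) = \<theta> * x (n - Suc c)" if "c < n" for c
      using eigen[of "n - Suc c"] that by (simp add: sum.nat_diff_reindex[where g = "\<lambda>k. x k * y k (n - Suc c)"])
    show "y (n - Suc k) (n - Suc c) = 0" if "k < n" "Suc c < k" for k c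
      using that by (intro hessenberg) auto
    show "y (n - Suc (Suc k)) (n - Suc k) \<noteq> 0" if "Suc k < n" for k
      using superdiag[of "n - Suc (Suc k)"] that by (simp add: Suc_diff_Suc)
  qed (use \<open>x (n - 1) = 0\<close> \<open>i < n\<close> in simp_all)
  then show ?thesis using \<open>i < n\<close> by simp
qed

lemma path_tridiagonal_left_eigenvector:
  fixes x :: "nat \<Rightarrow> 'a::field" and Y :: "'a mat"
  assumes path: "\<And>k j. k \<le> d \<Longrightarrow> j \<le> d \<Longrightarrow> Y $$ (k, j) \<noteq> 0 \<longleftrightarrow> k = Suc j \<or> j = Suc k"
    and eigen: "\<And>c. c \<le> d \<Longrightarrow> (\<Sum>k<d+1. x k * Y $$ (k, c)) = \<theta> * x c"
    and d: "1 \<le> d"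
  shows "x 1 * Y $$ (1, 0) = \<theta> * x 0"
    and "x (d - 1) * Y $$ (d - 1, d) = \<theta> * x d"
    and "(\<exists>k\<le>d. x k \<noteq> 0) \<Longrightarrow> x 0 \<noteq> 0 \<and> x d \<noteq> 0"
proof -
  have Y0: "Y $$ (k, j) = 0" if "k \<le> d" "j \<le> d" "k \<noteq> Suc j" "j \<noteq> Suc k" for k j
    using path that by blast
  have "(\<Sum>k<d+1. x k * Y $$ (k, 0)) = (\<Sum>k\<in>{1}. x k * Y $$ (k, 0))"
    using d by (intro sum.mono_neutral_right) (auto simp: Y0)
  then show "x 1 * Y $$ (1, 0) = \<theta> * x 0" using eigen[of 0] by simp
  have "(\<Sum>k<d+1. x k * Y $$ (k, d)) = (\<Sum>k\<in>{d - 1}. x k * Y $$ (k, d))"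
    using d by (intro sum.mono_neutral_right) (auto simp: Y0)
  then show "x (d - 1) * Y $$ (d - 1, d) = \<theta> * x d" using eigen[of d] by simp
  assume "\<exists>k\<le>d. x k \<noteq> 0"
  moreover have "x k = 0" if "x 0 = 0" "k \<le> d" for k
  proof (rule left_eigenvector_upper_hessenberg_vanishes[where n = "d+1" and y = "\<lambda>k c. Y $$ (k, c)"])
    show "(\<Sum>k<d+1. x k * Y $$ (k, c)) = \<theta> * x c" if "c < d+1" for c using eigen that by simp
    show "Y $$ (k, c) = 0" if "k < d+1" "Suc c < k" for k c using that by (intro Y0) auto
    show "Y $$ (Suc k, k) \<noteq> 0" if "Suc k < d+1" for k using path[of "Suc k" k] that by simp
  qed (use that in simp_all)
  moreover have "x k = 0" if "x d = 0" "k \<le> d" for k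
  proof (rule left_eigenvector_lower_hessenberg_vanishes[where n = "d+1" and y = "\<lambda>k c. Y $$ (k, c)"])
    show "(\<Sum>k<d+1. x k * Y $$ (k, c)) = \<theta> * x c" if "c < d+1" for c using eigen that by simp
    show "Y $$ (k, c) = 0" if "c < d+1" "Suc k < c" for k c using that by (intro Y0) auto
    show "Y $$ (k, Suc k) \<noteq> 0" if "Suc k < d+1" for k using path[of k "Suc k"] that by simp
  qed (use that in simp_all)
  ultimately show "x 0 \<noteq> 0 \<and> x d \<noteq> 0" by blast
qed

lemma eigenvector_first_entries:
  fixes B :: "'a::field mat" and z :: "nat \<Rightarrow> 'a"
  assumes d: "2 \<le> d"
    and B0: "\<And>k. 2 \<le> k \<Longrightarrow> k \<le> d \<Longrightarrow> B $$ (0, k) = 0"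
    and B1: "\<And>k. 3 \<le> k \<Longrightarrow> k \<le> d \<Longrightarrow> B $$ (1, k) = 0"
    and eigen0: "(\<Sum>k<d+1. B $$ (0, k) * z k) = s * z 0"
    and eigen1: "(\<Sum>k<d+1. B $$ (1, k) * z k) = s * z 1"
  shows "(s - B $$ (0, 0)) * z 0 = B $$ (0, 1) * z 1"
    and "((s - B $$ (0, 0)) * (s - B $$ (1, 1)) - B $$ (0, 1) * B $$ (1, 0)) * z 0
       = B $$ (0, 1) * B $$ (1, 2) * z 2"
proof -
  have "(\<Sum>k<d+1. B $$ (0, k) * z k) = (\<Sum>k\<in>{0, 1}. B $$ (0, k) * z k)"
    using d B0 by (intro sum.mono_neutral_right) auto
  then have row0: "s * z 0 = B $$ (0, 0) * z 0 + B $$ (0, 1) * z 1" using eigen0 by simp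
  have "(\<Sum>k<d+1. B $$ (1, k) * z k) = (\<Sum>k\<in>{0, 1, 2}. B $$ (1, k) * z k)"
    using d B1 by (intro sum.mono_neutral_right) auto
  then have row1: "s * z 1 = B $$ (1, 0) * z 0 + B $$ (1, 1) * z 1 + B $$ (1, 2) * z 2"
    using eigen1 by (simp add: add.assoc)
  show first: "(s - B $$ (0, 0)) * z 0 = B $$ (0, 1) * z 1"
    using row0 by (simp add: algebra_simps)
  have row1': "(s - B $$ (1, 1)) * z 1 - B $$ (1, 0) * z 0 = B $$ (1, 2) * z 2"
    using row1 by (simp add: algebra_simps)
  have "((s - B $$ (0, 0)) * (s - B $$ (1, 1)) - B $$ (0, 1) * B $$ (1, 0)) * z 0
      = (s - B $$ (1, 1)) * ((s - B $$ (0, 0)) * z 0) - B $$ (0, 1) * B $$ (1, 0) * z 0"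
    by (simp add: algebra_simps)
  also have "\<dots> = B $$ (0, 1) * ((s - B $$ (1, 1)) * z 1 - B $$ (1, 0) * z 0)"
    unfolding first by (simp add: algebra_simps)
  also have "\<dots> = B $$ (0, 1) * B $$ (1, 2) * z 2"
    unfolding row1' by simp
  finally show "((s - B $$ (0, 0)) * (s - B $$ (1, 1)) - B $$ (0, 1) * B $$ (1, 0)) * z 0
       = B $$ (0, 1) * B $$ (1, 2) * z 2" .
qed

lemma eliminate_transition_entries:
  fixes x00 x01 xk0 xk1 y t0 tk p0 p1 c :: "'a::field"
  assumes row0: "x01 * y = t0 * x00" and rowk: "xk1 * y = tk * xk0"
    and col0: "p0 * x00 = c * xk0" and col1: "p1 * x01 = c * xk1" and "x00 \<noteq> 0"
  shows "t0 * p1 = tk * p0"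
proof -
  have "x00 * (t0 * p1) = p1 * (x01 * y)" using row0 by (simp add: ac_simps)
  also have "\<dots> = c * (xk1 * y)" using col1 by (simp add: ac_simps)
  also have "\<dots> = x00 * (tk * p0)" using rowk col0 by (simp add: ac_simps)
  finally show ?thesis using \<open>x00 \<noteq> 0\<close> by simp
qed

lemma transition_matrix_tail_relations:
  fixes X Y B :: "'a::field mat" and th ths :: "nat \<Rightarrow> 'a"
  assumes d: "2 \<le> d"
    and X: "X \<in> carrier_mat (d+1) (d+1)" and Y: "Y \<in> carrier_mat (d+1) (d+1)"
    and B: "B \<in> carrier_mat (d+1) (d+1)"
    and XY: "X * Y = mat_diag (d+1) th * X" and BX: "B * X = X * mat_diag (d+1) ths"
    and path: "\<And>k j. k \<le> d \<Longrightarrow> j \<le> d \<Longrightarrow> Y $$ (k, j) \<noteq> 0 \<longleftrightarrow> k = Suc j \<or> j = Suc k"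
    and B0: "\<And>k. 2 \<le> k \<Longrightarrow> k \<le> d \<Longrightarrow> B $$ (0, k) = 0"
    and B1: "\<And>k. 3 \<le> k \<Longrightarrow> k \<le> d \<Longrightarrow> B $$ (1, k) = 0"
    and X_row: "\<exists>k\<le>d. X $$ (0, k) \<noteq> 0"
  defines "a0 \<equiv> B $$ (0, 0)" and "a1 \<equiv> B $$ (1, 1)" and "bc \<equiv> B $$ (0, 1) * B $$ (1, 0)"
  shows "th 0 * (ths 1 - a0) = th 1 * (ths 0 - a0)"
    and "th 1 * (ths d - a0) = th 0 * (ths (d - 1) - a0)"
    and "th 0 * ((ths 1 - a0) * (ths 1 - a1) - bc) = th 2 * ((ths 0 - a0) * (ths 0 - a1) - bc)"
    and "th 2 * ((ths d - a0) * (ths d - a1) - bc)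
       = th 0 * ((ths (d - 1) - a0) * (ths (d - 1) - a1) - bc)"
proof -
  have rows: "(\<Sum>k<d+1. X $$ (j, k) * Y $$ (k, c)) = th j * X $$ (j, c)" if "j \<le> d" "c \<le> d" for j c
  proof -
    have "(X * Y) $$ (j, c) = (mat_diag (d+1) th * X) $$ (j, c)" using XY by simp
    then show ?thesis
      using X Y that by (simp add: mat_diag_mult_left scalar_prod_def atLeast0LessThan)
  qed
  have cols: "(\<Sum>k<d+1. B $$ (j, k) * X $$ (k, i)) = ths i * X $$ (j, i)" if "j \<le> d" "i \<le> d" for j i
  proof -
    have "(B * X) $$ (j, i) = (X * mat_diag (d+1) ths) $$ (j, i)" using BX by simp
    then show ?thesis
      using X B that by (simp add: mat_diag_mult_right scalar_prod_def atLeast0LessThan mult.commute)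
  qed
  have d1: "1 \<le> d" using d by simp
  note row_rel = path_tridiagonal_left_eigenvector[OF path rows d1]
  have x0: "X $$ (0, 0) \<noteq> 0" "X $$ (0, d) \<noteq> 0" using row_rel(3)[of 0] X_row by auto
  have col_rel1: "(ths i - a0) * X $$ (0, i) = B $$ (0, 1) * X $$ (1, i)"
    and col_rel2: "((ths i - a0) * (ths i - a1) - bc) * X $$ (0, i) = B $$ (0, 1) * B $$ (1, 2) * X $$ (2, i)"
    if "i \<le> d" for i
    using eigenvector_first_entries[OF d B0 B1 cols[of 0 i] cols[of 1 i]] that d
    unfolding a0_def a1_def bc_def by simp_all
  show "th 0 * (ths 1 - a0) = th 1 * (ths 0 - a0)"
    using row_rel(1) d by (intro eliminate_transition_entries[OF _ _ col_rel1 col_rel1 x0(1)]) auto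
  show "th 1 * (ths d - a0) = th 0 * (ths (d - 1) - a0)"
    using row_rel(2) d by (intro eliminate_transition_entries[OF _ _ col_rel1 col_rel1 x0(2), symmetric]) auto
  show "th 0 * ((ths 1 - a0) * (ths 1 - a1) - bc) = th 2 * ((ths 0 - a0) * (ths 0 - a1) - bc)"
    using row_rel(1) d by (intro eliminate_transition_entries[OF _ _ col_rel2 col_rel2 x0(1)]) auto
  show "th 2 * ((ths d - a0) * (ths d - a1) - bc)
      = th 0 * ((ths (d - 1) - a0) * (ths (d - 1) - a1) - bc)"
    using row_rel(2) d by (intro eliminate_transition_entries[OF _ _ col_rel2 col_rel2 x0(2), symmetric]) auto
qed

lemma solve_tail_relations:
  fixes t0 t1 t2 s0 s1 sm sd a0 a1 bc :: "'a::field"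
  assumes E1: "t0 * (s1 - a0) = t1 * (s0 - a0)" and E2: "t1 * (sd - a0) = t0 * (sm - a0)"
    and E3: "t0 * ((s1 - a0) * (s1 - a1) - bc) = t2 * ((s0 - a0) * (s0 - a1) - bc)"
    and E4: "t2 * ((sd - a0) * (sd - a1) - bc) = t0 * ((sm - a0) * (sm - a1) - bc)"
    and "t2 \<noteq> t1" "t2 \<noteq> t0" "sd \<noteq> s0"
  shows "s1 + s0 - a1 - a0 = (t1 * (sm - s0) - t2 * (sd - s1)) / (t2 - t1)
     \<and> a0 * a1 - bc - s0 * s1 = (t2 * s0 - t0 * s1) / (t2 - t0)
                 * ((t2 * (sd - s1) - t1 * (sm - s0)) / (t2 - t1))"
proof -
  define psi where "psi = s1 + s0 - a1 - a0"
  define zeta where "zeta = a0 * a1 - bc - s0 * s1"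
  have "t0 * (s1 - a0) + t1 * (sd - a0) = t1 * (s0 - a0) + t0 * (sm - a0)" using E1 E2 by simp
  then have t1_ratio: "t1 * (sd - s0) = t0 * (sm - s1)" by (simp add: algebra_simps)
  have zeta_psi: "zeta * (t0 - t2) = psi * (t2 * s0 - t0 * s1)"
    using E3 unfolding psi_def zeta_def by (simp add: algebra_simps)
  have "psi * (t2 - t1) * (sd - s0) = (t1 * (sm - s0) - t2 * (sd - s1)) * (sd - s0)"
  proof -
    have "psi * (t2 - t1) * (sd - s0) - (t1 * (sm - s0) - t2 * (sd - s1)) * (sd - s0)
       = (t2 * ((sd - a0) * (sd - a1) - bc) - t0 * ((sm - a0) * (sm - a1) - bc))
         + (zeta * (t0 - t2) - psi * (t2 * s0 - t0 * s1))
         - (sm - s0 + psi) * (t1 * (sd - s0) - t0 * (sm - s1))"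
      unfolding psi_def zeta_def by (simp add: algebra_simps)
    then show ?thesis using E4 zeta_psi t1_ratio by simp
  qed
  then have psi: "psi = (t1 * (sm - s0) - t2 * (sd - s1)) / (t2 - t1)"
    using assms(5,7) by (simp add: eq_divide_eq)
  have "zeta = (t2 * s0 - t0 * s1) / (t2 - t0) * (- psi)"
    using zeta_psi assms(6) by (simp add: field_simps)
  moreover have "(t2 * (sd - s1) - t1 * (sm - s0)) / (t2 - t1) = - psi"
    unfolding psi minus_divide_left by (simp add: algebra_simps)
  ultimately show ?thesis using psi unfolding psi_def zeta_def by simp
qed

lemma bipartite_tridiagonal_representation:
  fixes A P Y :: "'a::field mat"
  assumes basis: "adapted_basis (d+1) Es P"
    and A: "A \<in> carrier_mat (d+1) (d+1)" and Y: "Y \<in> carrier_mat (d+1) (d+1)" and AP: "A * P = P * Y"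
    and tri0: "\<forall>i\<le>d. \<forall>j\<le>d. nat \<bar>int i - int j\<bar> > 1 \<longrightarrow> Es i * A * Es j = 0\<^sub>m (d+1) (d+1)"
    and tri1: "\<forall>i\<le>d. \<forall>j\<le>d. nat \<bar>int i - int j\<bar> = 1 \<longrightarrow> Es i * A * Es j \<noteq> 0\<^sub>m (d+1) (d+1)"
    and bip: "bipartite d Es A"
    and k: "k \<le> d" and j: "j \<le> d"
  shows "Y $$ (k, j) \<noteq> 0 \<longleftrightarrow> k = Suc j \<or> j = Suc k"
proof -
  have k': "k < d+1" and j': "j < d+1" using k j by simp_all
  note entry_iff = adapted_basis.entry_eq_0_iff[OF basis A Y AP k' j']
  consider "k = j" | "nat \<bar>int k - int j\<bar> = 1" | "nat \<bar>int k - int j\<bar> > 1" by linarith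
  then show ?thesis
  proof cases
    case 1
    have "Y $$ (k, k) = mtrace (Es k * A)"
      using adapted_basis.mtrace_eq_entry[OF basis A Y AP k'] by simp
    also have "\<dots> = 0" using bip k unfolding bipartite_def by blast
    finally show ?thesis using 1 by simp
  next
    case 2
    then show ?thesis using tri1 k j entry_iff by auto
  next
    case 3
    then show ?thesis using tri0 k j entry_iff by auto
  qed
qed

lemma tail_representation_zeros:
  fixes As W B :: "'a::field mat"
  assumes basis: "adapted_basis (d+1) E W" and d: "3 \<le> d"
    and As: "As \<in> carrier_mat (d+1) (d+1)" and B: "B \<in> carrier_mat (d+1) (d+1)"
    and AsW: "As * W = W * B"
    and E_distinct: "\<And>k j. k \<le> d \<Longrightarrow> j \<le> d \<Longrightarrow> k \<noteq> j \<Longrightarrow> E k \<noteq> E j"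
    and tail: "is_tail d E As" and adj12: "Delta_adj d E As 1 2"
  shows "\<And>k. 2 \<le> k \<Longrightarrow> k \<le> d \<Longrightarrow> B $$ (0, k) = 0"
    and "\<And>k. 3 \<le> k \<Longrightarrow> k \<le> d \<Longrightarrow> B $$ (1, k) = 0"
proof -
  have zero_if_not_adj: "B $$ (i, k) = 0"
    if "\<not> Delta_adj d E As i k" "i \<le> d" "k \<le> d" "i \<noteq> k" for i k
    using that E_distinct adapted_basis.entry_eq_0_iff[OF basis As B AsW, of i k]
    unfolding Delta_adj_def by simp
  show "B $$ (0, k) = 0" if k: "2 \<le> k" "k \<le> d" for k
  proof (rule zero_if_not_adj)
    show "\<not> Delta_adj d E As 0 k"
      using tail E_distinct[of k 1] k d unfolding is_tail_def by auto
  qed (use k in auto)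
  show "B $$ (1, k) = 0" if k: "3 \<le> k" "k \<le> d" for k
  proof (rule zero_if_not_adj)
    let ?S = "{E j | j. j \<le> d \<and> Delta_adj d E As 1 j \<and> E j \<noteq> E 0}"
    show "\<not> Delta_adj d E As 1 k"
    proof
      assume "Delta_adj d E As 1 k"
      then have "{E 2, E k} \<subseteq> ?S" using adj12 k d E_distinct[of k 0] E_distinct[of 2 0] by auto
      moreover have "finite ?S" by (rule finite_subset[of _ "E ` {..d}"]) auto
      ultimately have "card {E 2, E k} \<le> card ?S" by (rule card_mono[rotated])
      moreover have "card {E 2, E k} = 2" using E_distinct[of 2 k] k d by auto
      moreover have "card ?S \<le> 1" using tail unfolding is_tail_def by auto
      ultimately show False by simp
    qed
  qed (use k d in auto)
qed

theorem lemma8p3: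
  fixes d :: nat
    and Es E :: "nat \<Rightarrow> 'a::field mat"
    and A :: "'a mat"
    and th ths :: "nat \<Rightarrow> 'a"
  assumes d3: "d \<ge> 3"
    and Es: "orth_idem_system d Es"
    and A: "A \<in> carrier_mat (d+1) (d+1)"
    and tri0: "\<forall>i\<le>d. \<forall>j\<le>d. nat \<bar>int i - int j\<bar> > 1 \<longrightarrow> Es i * A * Es j = 0\<^sub>m (d+1) (d+1)"
    and tri1: "\<forall>i\<le>d. \<forall>j\<le>d. nat \<bar>int i - int j\<bar> = 1 \<longrightarrow> Es i * A * Es j \<noteq> 0\<^sub>m (d+1) (d+1)"
    and prim: "primitive_idempotents d A th E"
    and bip: "bipartite d Es A"
    and ths_dist: "\<forall>i\<le>d. \<forall>j\<le>d. i \<noteq> j \<longrightarrow> ths i \<noteq> ths j"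
    and norm: "normalizing d Es A (th 0)"
    and tail: "is_tail d E (mat (d+1) (d+1) (\<lambda>(r, c). \<Sum>i\<le>d. ths i * Es i $$ (r, c)))"
    and adj12: "Delta_adj d E (mat (d+1) (d+1) (\<lambda>(r, c). \<Sum>i\<le>d. ths i * Es i $$ (r, c))) 1 2"
    and W: "W \<in> carrier_mat (d+1) (d+1)" "invertible_mat W"
           "\<forall>i\<le>d. col W i \<in> (\<lambda>v. E i *\<^sub>v v) ` carrier_vec (d+1)"
    and B: "B \<in> carrier_mat (d+1) (d+1)"
           "mat (d+1) (d+1) (\<lambda>(r, c). \<Sum>i\<le>d. ths i * Es i $$ (r, c)) * W = W * B"
  shows "let As = mat (d+1) (d+1) (\<lambda>(r, c). \<Sum>i\<le>d. ths i * Es i $$ (r, c));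
             as = (\<lambda>i. mtrace (E i * As));
             bc = B $$ (0, 1) * B $$ (1, 0);
             psi = ths 1 + ths 0 - as 1 - as 0;
             zeta = as 0 * as 1 - bc - ths 0 * ths 1
         in psi = (th 1 * (ths (d-1) - ths 0) - th 2 * (ths d - ths 1)) / (th 2 - th 1)
          \<and> zeta = (th 2 * ths 0 - th 0 * ths 1) / (th 2 - th 0)
                 * ((th 2 * (ths d - ths 1) - th 1 * (ths (d-1) - ths 0)) / (th 2 - th 1))"
proof -
  define As where "As = mat (d+1) (d+1) (\<lambda>(r, c). \<Sum>i\<le>d. ths i * Es i $$ (r, c))"
  have As_comb: "As = idem_combination (d+1) ths Es"
    unfolding As_def idem_combination_def by (simp add: lessThan_Suc_atMost)
  have As_c: "As \<in> carrier_mat (d+1) (d+1)" unfolding As_def by simp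
  obtain P Y where P: "P \<in> carrier_mat (d+1) (d+1)" "invertible_mat P"
      "\<forall>i\<le>d. col P i \<in> (\<lambda>v. Es i *\<^sub>v v) ` carrier_vec (d+1)"
    and Y: "Y \<in> carrier_mat (d+1) (d+1)" and AP: "A * P = P * Y"
    \<comment> \<open>only the basis provided by normalizing is used, not its row-sum condition\<close>
    using norm unfolding normalizing_def by auto
  note W_basis = primitive_idempotents_adapted_basis[OF prim A W]
  have P_basis: "adapted_basis (d+1) Es P" and AsP: "As * P = P * mat_diag (d+1) ths"
    unfolding As_comb by (fact orth_idem_system_adapted_basis[OF Es P])+
  obtain X where X: "X \<in> carrier_mat (d+1) (d+1)"
    and X_rows: "\<And>i. i < d+1 \<Longrightarrow> \<exists>k<d+1. X $$ (i, k) \<noteq> 0"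
    and intertwines: "\<And>M N K. M \<in> carrier_mat (d+1) (d+1) \<Longrightarrow> N \<in> carrier_mat (d+1) (d+1)
      \<Longrightarrow> K \<in> carrier_mat (d+1) (d+1) \<Longrightarrow> M * W = W * N \<Longrightarrow> M * P = P * K \<Longrightarrow> N * X = X * K"
    by (rule transition_matrix_intertwines[OF W(1,2) P(1,2)]) (rule that)
  have XY: "X * Y = mat_diag (d+1) th * X" using intertwines[OF A _ Y W_basis(2) AP] by simp
  have BX: "B * X = X * mat_diag (d+1) ths"
    using intertwines[OF As_c B(1) _ B(2)[folded As_def] AsP] by simp
  have X_row: "\<exists>k\<le>d. X $$ (0, k) \<noteq> 0" using X_rows[of 0] by (simp add: less_Suc_eq_le)
  note Y_path = bipartite_tridiagonal_representation[OF P_basis A Y AP tri0 tri1 bip]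
  note B_zeros = tail_representation_zeros[OF W_basis(1) d3 As_c B(1) B(2)[folded As_def]
      primitive_idempotents_distinct[OF prim A] tail[folded As_def] adj12[folded As_def]]
  note rel = transition_matrix_tail_relations[OF _ X Y B(1) XY BX Y_path B_zeros X_row]
  have "mtrace (E 0 * As) = B $$ (0, 0)" "mtrace (E 1 * As) = B $$ (1, 1)"
    using adapted_basis.mtrace_eq_entry[OF W_basis(1) As_c B(1) B(2)[folded As_def]] d3 by auto
  moreover have "th 2 \<noteq> th 1" "th 2 \<noteq> th 0" "ths d \<noteq> ths 0"
    using prim ths_dist d3 unfolding primitive_idempotents_def by auto
  ultimately show ?thesis
    using solve_tail_relations[OF rel] d3 unfolding Let_def As_def[symmetric] by auto
qed

end
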